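(* Let $n$ be a positive integer and suppose $c_n<1$. Then for every profinite group $G$ such that $X_n(G)=\{x\in G : x^n=1\}$ has positive Haar measure, there exist an open subgroup $H$ of $G$ and an element $t\in G$ such that every element of the coset $tH$ has order dividing $n$.
   Context: Haar measure means normalized Haar measure. For a group $K$ and an automorphism $\phi$ of $K$ whose order divides $n$, writing $x^\phi$ for the image of $x$, set $X_{n,\phi}(K):=\{x\in K : x x^{\phi} x^{\phi^2}\cdots x^{\phi^{n-1}}=1\}$. Define $$c_n:=\sup\left(\left\{\frac{|X_{n,\phi}(H)|}{|H|} : H \text{ a finite group},\ \phi\in \mathrm{Aut}(H),\ \phi^n=\mathrm{id}\right\}\setminus\{1\}\right).$$ *)

theory Defs
  imports "HOL-Analysis.Analysis" "HOL-Probability.Probability" "HOL-Algebra.Algebra"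
begin

definition borel_of :: "'a topology \<Rightarrow> 'a measure" where
  "borel_of T = sigma (topspace T) {U. openin T U}"

definition topological_group :: "('a, 'b) monoid_scheme \<Rightarrow> 'a topology \<Rightarrow> bool" where
  "topological_group G T \<longleftrightarrow> group G \<and> topspace T = carrier G \<and>
     continuous_map (prod_topology T T) T (\<lambda>(x, y). x \<otimes>\<^bsub>G\<^esub> y) \<and>
     continuous_map T T (\<lambda>x. inv\<^bsub>G\<^esub> x)"

definition profinite_group :: "('a, 'b) monoid_scheme \<Rightarrow> 'a topology \<Rightarrow> bool" where
  "profinite_group G T \<longleftrightarrow> topological_group G T \<and> compact_space T \<and> Hausdorff_space T \<and>
     (\<forall>x\<in>topspace T. connected_component_of_set T x = {x})"

definition haar_measure :: "('a, 'b) monoid_scheme \<Rightarrow> 'a topology \<Rightarrow> 'a measure \<Rightarrow> bool" where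
  "haar_measure G T \<mu> \<longleftrightarrow> prob_space \<mu> \<and> space \<mu> = carrier G \<and> sets \<mu> = sets (borel_of T) \<and>
     (\<forall>g\<in>carrier G. \<forall>A\<in>sets \<mu>. emeasure \<mu> ((\<lambda>x. g \<otimes>\<^bsub>G\<^esub> x) ` A) = emeasure \<mu> A) \<and>
     (\<forall>A\<in>sets \<mu>. emeasure \<mu> A = (INF U\<in>{U. openin T U \<and> A \<subseteq> U}. emeasure \<mu> U)) \<and>
     (\<forall>U. openin T U \<longrightarrow> emeasure \<mu> U = (SUP K\<in>{K. compactin T K \<and> K \<subseteq> U}. emeasure \<mu> K))"

definition twisted_prod :: "('a, 'b) monoid_scheme \<Rightarrow> ('a \<Rightarrow> 'a) \<Rightarrow> nat \<Rightarrow> 'a \<Rightarrow> 'a" where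
  "twisted_prod H \<phi> n x = foldr (\<lambda>i acc. (\<phi> ^^ i) x \<otimes>\<^bsub>H\<^esub> acc) [0..<n] \<one>\<^bsub>H\<^esub>"

definition X_twisted :: "('a, 'b) monoid_scheme \<Rightarrow> ('a \<Rightarrow> 'a) \<Rightarrow> nat \<Rightarrow> 'a set" where
  "X_twisted H \<phi> n = {x \<in> carrier H. twisted_prod H \<phi> n x = \<one>\<^bsub>H\<^esub>}"

text \<open>c_n: finite groups are taken up to isomorphism, represented with carriers in nat.\<close>
definition c_const :: "nat \<Rightarrow> real" where
  "c_const n = Sup ({real (card (X_twisted H \<phi> n)) / real (card (carrier H)) | (H :: nat monoid) \<phi>.
       group H \<and> finite (carrier H) \<and> \<phi> \<in> iso H H \<and> (\<forall>x\<in>carrier H. (\<phi> ^^ n) x = x)} - {1})"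

end

theory Submission
  imports Defs
begin

(*
  Let X = {x. x^n = 1}, a closed set of positive Haar measure, and c = c_n < 1. Outer
  regularity and compactness give an open normal subgroup N and a coset N t, with t in X,
  in which X has relative measure greater than c. For every smaller open normal subgroup M,
  conjugation by t induces an automorphism phi of the finite group N/M with phi^n = 1, and
  (y t)^n = y (t y t^-1) ... (t^(n-1) y t^(1-n)) because t^n = 1. Hence (y t)^n lies in M
  exactly when the coset M y lies in X_{n,phi}(N/M), and the relative measure of X in N t is
  at most |X_{n,phi}(N/M)| / |N/M|. This ratio exceeds c_n, so it equals 1: every (y t)^n
  lies in M. Since the open normal subgroups intersect trivially, every element of N t has
  order dividing n.
*)

lemma funpow_closed:
  assumes "\<And>x. x \<in> A \<Longrightarrow> \<sigma> x \<in> A" and "x \<in> A"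
  shows "(\<sigma> ^^ i) x \<in> A"
  by (induction i) (use assms in auto)

lemma funpow_commute_on:
  assumes "\<And>x. x \<in> A \<Longrightarrow> \<sigma> x \<in> A" and "\<And>x. x \<in> A \<Longrightarrow> h (\<sigma> x) = \<phi> (h x)" and "x \<in> A"
  shows "h ((\<sigma> ^^ i) x) = (\<phi> ^^ i) (h x)"
  by (induction i) (use assms funpow_closed[of A \<sigma>] in auto)

section \<open>Twisted products\<close>

context group
begin

lemma inv_mult_cancel_left [simp]: "x \<in> carrier G \<Longrightarrow> y \<in> carrier G \<Longrightarrow> inv x \<otimes> (x \<otimes> y) = y"
  by (simp add: m_assoc[symmetric])

lemma mult_inv_cancel_left [simp]: "x \<in> carrier G \<Longrightarrow> y \<in> carrier G \<Longrightarrow> x \<otimes> (inv x \<otimes> y) = y"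
  by (simp add: m_assoc[symmetric])

lemma foldr_mult_closed:
  assumes "\<And>i. i \<in> set xs \<Longrightarrow> g i \<in> carrier G" and "a \<in> carrier G"
  shows "foldr (\<lambda>i acc. g i \<otimes> acc) xs a \<in> carrier G"
  using assms by (induction xs) auto

lemma foldr_mult_eq_mult:
  assumes "\<And>i. i \<in> set xs \<Longrightarrow> g i \<in> carrier G" and "a \<in> carrier G"
  shows "foldr (\<lambda>i acc. g i \<otimes> acc) xs a = foldr (\<lambda>i acc. g i \<otimes> acc) xs \<one> \<otimes> a"
  using assms by (induction xs) (auto simp: m_assoc foldr_mult_closed)

lemma twisted_prod_closed:
  assumes "\<And>i. (\<sigma> ^^ i) x \<in> carrier G"
  shows "twisted_prod G \<sigma> k x \<in> carrier G"
  unfolding twisted_prod_def using assms by (intro foldr_mult_closed) auto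

lemma twisted_prod_Suc:
  assumes "\<And>i. (\<sigma> ^^ i) x \<in> carrier G"
  shows "twisted_prod G \<sigma> (Suc k) x = twisted_prod G \<sigma> k x \<otimes> (\<sigma> ^^ k) x"
  unfolding twisted_prod_def using assms by (simp add: foldr_mult_eq_mult[of _ _ "(\<sigma> ^^ k) x"])

lemma conj_funpow:
  assumes "t \<in> carrier G" and "x \<in> carrier G"
  shows "((\<lambda>x. t \<otimes> x \<otimes> inv t) ^^ i) x = t [^] i \<otimes> x \<otimes> inv (t [^] i)"
proof (induction i)
  case (Suc i)
  have "((\<lambda>x. t \<otimes> x \<otimes> inv t) ^^ Suc i) x = t \<otimes> (t [^] i \<otimes> x \<otimes> inv (t [^] i)) \<otimes> inv t"
    using Suc by simp
  also have "\<dots> = (t \<otimes> t [^] i) \<otimes> x \<otimes> inv (t \<otimes> t [^] i)"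
    using assms by (simp add: inv_mult_group m_assoc)
  also have "\<dots> = t [^] Suc i \<otimes> x \<otimes> inv (t [^] Suc i)"
    using assms by (simp only: nat_pow_Suc2)
  finally show ?case .
qed (use assms in simp)

lemma twisted_prod_conj_closed:
  "t \<in> carrier G \<Longrightarrow> y \<in> carrier G \<Longrightarrow> twisted_prod G (\<lambda>x. t \<otimes> x \<otimes> inv t) k y \<in> carrier G"
  by (intro twisted_prod_closed) (simp add: conj_funpow)

lemma pow_mult_eq_twisted_prod:
  assumes t: "t \<in> carrier G" and y: "y \<in> carrier G"
  shows "(y \<otimes> t) [^] k = twisted_prod G (\<lambda>x. t \<otimes> x \<otimes> inv t) k y \<otimes> t [^] k"
proof (induction k)
  case 0
  then show ?case by (simp add: twisted_prod_def)
next
  case (Suc k)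
  have "(y \<otimes> t) [^] Suc k
      = twisted_prod G (\<lambda>x. t \<otimes> x \<otimes> inv t) k y \<otimes> (t [^] k \<otimes> y \<otimes> inv (t [^] k)) \<otimes> (t [^] k \<otimes> t)"
    using Suc t y twisted_prod_conj_closed[OF t y] by (simp add: m_assoc)
  also have "\<dots> = twisted_prod G (\<lambda>x. t \<otimes> x \<otimes> inv t) (Suc k) y \<otimes> t [^] Suc k"
    using twisted_prod_Suc[of "\<lambda>x. t \<otimes> x \<otimes> inv t"] conj_funpow[OF t y] t y by simp
  finally show ?case .
qed

corollary pow_mult_eq_twisted_prod_if_pow_eq_one:
  assumes "t \<in> carrier G" "y \<in> carrier G" "t [^] n = \<one>"
  shows "(y \<otimes> t) [^] n = twisted_prod G (\<lambda>x. t \<otimes> x \<otimes> inv t) n y"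
  using pow_mult_eq_twisted_prod[of t y n] twisted_prod_conj_closed[of t y n] assms by simp

end

lemma twisted_prod_carrier_update [simp]:
  "twisted_prod (G\<lparr>carrier := N\<rparr>) \<sigma> k x = twisted_prod G \<sigma> k x"
  by (simp add: twisted_prod_def)

lemma hom_twisted_prod:
  assumes H: "group H" and Q: "group Q" and h: "h \<in> hom H Q"
    and \<sigma>: "\<And>x. x \<in> carrier H \<Longrightarrow> \<sigma> x \<in> carrier H"
    and comm: "\<And>x. x \<in> carrier H \<Longrightarrow> h (\<sigma> x) = \<phi> (h x)"
    and x: "x \<in> carrier H"
  shows "h (twisted_prod H \<sigma> k x) = twisted_prod Q \<phi> k (h x)"
proof -
  have H_closed: "(\<sigma> ^^ i) x \<in> carrier H" for i
    using funpow_closed[of "carrier H" \<sigma>, OF \<sigma> x] .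
  have funpow: "h ((\<sigma> ^^ i) x) = (\<phi> ^^ i) (h x)" for i
    using funpow_commute_on[of "carrier H" \<sigma> h \<phi>, OF \<sigma> comm x] .
  have Q_closed: "(\<phi> ^^ i) (h x) \<in> carrier Q" for i
    using H_closed funpow h by (metis hom_in_carrier)
  show ?thesis
  proof (induction k)
    case 0
    then show ?case using hom_one[OF h H Q] by (simp add: twisted_prod_def)
  next
    case (Suc k)
    have "twisted_prod H \<sigma> k x \<in> carrier H"
      using H_closed by (rule group.twisted_prod_closed[OF H])
    then show ?case
      using Suc funpow H_closed Q_closed h
      by (simp add: group.twisted_prod_Suc[OF H] group.twisted_prod_Suc[OF Q] hom_mult)
  qed
qed

lemma card_X_twisted_iso:
  assumes H: "group H" and Q: "group Q" and h: "h \<in> iso H Q"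
    and \<sigma>: "\<And>x. x \<in> carrier H \<Longrightarrow> \<sigma> x \<in> carrier H"
    and comm: "\<And>x. x \<in> carrier H \<Longrightarrow> h (\<sigma> x) = \<phi> (h x)"
  shows "card (X_twisted Q \<phi> n) = card (X_twisted H \<sigma> n)"
proof -
  have hom: "h \<in> hom H Q" and bij: "bij_betw h (carrier H) (carrier Q)"
    using h by (auto simp: iso_def)
  have fixed_iff: "twisted_prod H \<sigma> n x = \<one>\<^bsub>H\<^esub> \<longleftrightarrow> twisted_prod Q \<phi> n (h x) = \<one>\<^bsub>Q\<^esub>"
    if x: "x \<in> carrier H" for x
  proof -
    have "twisted_prod H \<sigma> n x \<in> carrier H"
      using funpow_closed[of "carrier H" \<sigma>, OF \<sigma> x] by (rule group.twisted_prod_closed[OF H])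
    then show ?thesis
      using hom_twisted_prod[where \<sigma>=\<sigma> and \<phi>=\<phi>, OF H Q hom \<sigma> comm x] hom_one[OF hom H Q]
        bij_betw_imp_inj_on[OF bij] group.is_monoid[OF H]
      by (metis inj_on_eq_iff monoid.one_closed)
  qed
  have "X_twisted Q \<phi> n = {y \<in> h ` carrier H. twisted_prod Q \<phi> n y = \<one>\<^bsub>Q\<^esub>}"
    using bij by (simp add: X_twisted_def bij_betw_def)
  also have "\<dots> = h ` X_twisted H \<sigma> n"
    using fixed_iff by (auto simp: X_twisted_def)
  finally have "X_twisted Q \<phi> n = h ` X_twisted H \<sigma> n" .
  moreover have "inj_on h (X_twisted H \<sigma> n)"
    using bij_betw_imp_inj_on[OF bij] by (rule inj_on_subset) (auto simp: X_twisted_def)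
  ultimately show ?thesis by (simp add: card_image)
qed

text \<open>\<open>c_const\<close> only ranges over groups carried by \<open>nat\<close>, so a finite group has to be
  transported to such a copy before its twisted density can be compared with it.\<close>

lemma ex_iso_nat_monoid:
  assumes Q: "group Q" and fin: "finite (carrier Q)"
  obtains H :: "nat monoid" and f where "group H" "f \<in> iso H Q"
proof -
  interpret Q: group Q by (rule Q)
  obtain f where f: "bij_betw f {0..<card (carrier Q)} (carrier Q)"
    using ex_bij_betw_nat_finite[OF fin] by blast
  define g where "g = inv_into {0..<card (carrier Q)} f"
  have fg: "f (g x) = x" and g: "g x < card (carrier Q)" if "x \<in> carrier Q" for x
    using f bij_betw_apply[OF bij_betw_inv_into[OF f]] that unfolding g_def
    by (auto simp: bij_betw_inv_into_right)
  have gf: "g (f a) = a" and fc: "f a \<in> carrier Q" if "a < card (carrier Q)" for a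
    using f that unfolding g_def by (auto simp: bij_betw_inv_into_left bij_betw_def)
  define H :: "nat monoid" where
    "H = \<lparr>carrier = {0..<card (carrier Q)}, mult = \<lambda>a b. g (f a \<otimes>\<^bsub>Q\<^esub> f b), one = g \<one>\<^bsub>Q\<^esub>\<rparr>"
  have "group H"
  proof (rule groupI)
    fix x assume x: "x \<in> carrier H"
    show "\<one>\<^bsub>H\<^esub> \<otimes>\<^bsub>H\<^esub> x = x" using x by (simp add: H_def fg gf fc)
    have "g (inv\<^bsub>Q\<^esub> f x) \<otimes>\<^bsub>H\<^esub> x = \<one>\<^bsub>H\<^esub>" using x by (simp add: H_def fg fc)
    moreover have "g (inv\<^bsub>Q\<^esub> f x) \<in> carrier H" using x by (simp add: H_def g fc)
    ultimately show "\<exists>y\<in>carrier H. y \<otimes>\<^bsub>H\<^esub> x = \<one>\<^bsub>H\<^esub>" by blast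
  qed (auto simp: H_def fg g fc Q.m_assoc)
  moreover have "f \<in> iso H Q"
    using f by (auto simp: H_def iso_def hom_def fg fc)
  ultimately show thesis by (rule that)
qed

lemma ex_iso_transported_automorphism:
  assumes H: "group H" and Q: "group Q" and f: "f \<in> iso H Q" and \<phi>: "\<phi> \<in> iso Q Q"
    and period: "\<forall>x\<in>carrier Q. (\<phi> ^^ n) x = x"
  obtains \<psi> where "\<psi> \<in> iso H H" "\<forall>x\<in>carrier H. (\<psi> ^^ n) x = x"
    "card (X_twisted H \<psi> n) = card (X_twisted Q \<phi> n)"
proof -
  have bij: "bij_betw f (carrier H) (carrier Q)" and bij\<phi>: "bij_betw \<phi> (carrier Q) (carrier Q)"
    using f \<phi> by (auto simp: iso_def)
  define \<psi> where "\<psi> = inv_into (carrier H) f \<circ> \<phi> \<circ> f"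
  have \<psi>: "\<psi> \<in> iso H H"
    unfolding \<psi>_def using iso_set_trans[OF iso_set_trans[OF f \<phi>] group.iso_set_sym[OF H f]]
    by (simp add: comp_assoc)
  have \<psi>_closed: "\<psi> x \<in> carrier H" if "x \<in> carrier H" for x
    using \<psi> that by (auto simp: iso_def bij_betw_def)
  have comm: "f (\<psi> x) = \<phi> (f x)" if "x \<in> carrier H" for x
  proof -
    have "\<phi> (f x) \<in> f ` carrier H"
      using that bij bij\<phi> by (metis bij_betw_apply bij_betw_imp_surj_on)
    then show ?thesis by (simp add: \<psi>_def f_inv_into_f)
  qed
  have "\<forall>x\<in>carrier H. (\<psi> ^^ n) x = x"
  proof
    fix x assume x: "x \<in> carrier H"
    have "f ((\<psi> ^^ n) x) = f x"
      using funpow_commute_on[of "carrier H" \<psi> f \<phi>, OF \<psi>_closed comm x] period x bij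
      by (auto simp: bij_betw_def)
    then show "(\<psi> ^^ n) x = x"
      using bij funpow_closed[of "carrier H" \<psi>, OF \<psi>_closed x] x by (auto simp: bij_betw_def inj_on_def)
  qed
  then show thesis
    using that \<psi> card_X_twisted_iso[where \<phi>=\<phi>, OF H Q f \<psi>_closed comm] by simp
qed

lemma twisted_density_le_c_const:
  assumes Q: "group Q" and fin: "finite (carrier Q)" and \<phi>: "\<phi> \<in> iso Q Q"
    and period: "\<forall>x\<in>carrier Q. (\<phi> ^^ n) x = x"
    and proper: "card (X_twisted Q \<phi> n) \<noteq> card (carrier Q)"
  shows "card (X_twisted Q \<phi> n) / card (carrier Q) \<le> c_const n"
proof -
  obtain H :: "nat monoid" and f where H: "group H" and f: "f \<in> iso H Q"
    using ex_iso_nat_monoid[OF Q fin] .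
  obtain \<psi> where \<psi>: "\<psi> \<in> iso H H" "\<forall>x\<in>carrier H. (\<psi> ^^ n) x = x"
    and card_X: "card (X_twisted H \<psi> n) = card (X_twisted Q \<phi> n)"
    using ex_iso_transported_automorphism[OF H Q f \<phi> period] .
  have bij: "bij_betw f (carrier H) (carrier Q)"
    using f by (simp add: iso_def)
  then have card_H: "card (carrier H) = card (carrier Q)" and fin_H: "finite (carrier H)"
    using fin bij_betw_same_card bij_betw_finite by blast+
  define S where "S = {real (card (X_twisted H \<phi> n)) / real (card (carrier H)) | (H :: nat monoid) \<phi>.
        group H \<and> finite (carrier H) \<and> \<phi> \<in> iso H H \<and> (\<forall>x\<in>carrier H. (\<phi> ^^ n) x = x)}"
  have "card (X_twisted Q \<phi> n) / card (carrier Q) = card (X_twisted H \<psi> n) / card (carrier H)"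
    using card_X card_H by simp
  then have "card (X_twisted Q \<phi> n) / card (carrier Q) \<in> S"
    unfolding S_def using H fin_H \<psi> by blast
  moreover have "carrier Q \<noteq> {}"
    using Q group.is_monoid monoid.one_closed by blast
  then have "card (X_twisted Q \<phi> n) / card (carrier Q) \<noteq> 1"
    using proper fin by (simp add: divide_eq_1_iff)
  ultimately have "card (X_twisted Q \<phi> n) / card (carrier Q) \<in> S - {1}"
    by blast
  moreover have "r \<le> 1" if "r \<in> S" for r
    using that unfolding S_def by (auto simp: divide_le_eq_1 X_twisted_def card_gt_0_iff intro!: card_mono)
  then have "bdd_above (S - {1})" by (meson DiffD1 bdd_aboveI)
  ultimately show ?thesis
    unfolding c_const_def S_def[symmetric] by (rule cSup_upper)
qed

section \<open>Automorphisms of quotient groups\<close>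

lemma (in group) conj_mem_normal_iff:
  assumes M: "M \<lhd> G" and t: "t \<in> carrier G" and x: "x \<in> carrier G"
  shows "t \<otimes> x \<otimes> inv t \<in> M \<longleftrightarrow> x \<in> M"
proof
  assume "t \<otimes> x \<otimes> inv t \<in> M"
  then have "inv t \<otimes> (t \<otimes> x \<otimes> inv t) \<otimes> t \<in> M"
    using normal.inv_op_closed1[OF M t] by blast
  then show "x \<in> M"
    using t x by (simp add: m_assoc)
qed (use normal.inv_op_closed2[OF M t] in blast)

lemma (in group) conj_iso_normal:
  assumes N: "N \<lhd> G" and t: "t \<in> carrier G"
  shows "(\<lambda>x. t \<otimes> x \<otimes> inv t) \<in> iso (G\<lparr>carrier := N\<rparr>) (G\<lparr>carrier := N\<rparr>)"
proof -
  have N_sub: "N \<subseteq> carrier G"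
    using N normal_imp_subgroup subgroup.subset by blast
  have conj_in: "g \<otimes> x \<otimes> inv g \<in> N" if "g \<in> carrier G" "x \<in> N" for g x
    using normal.inv_op_closed2[OF N that] .
  have "(\<lambda>x. t \<otimes> x \<otimes> inv t) \<in> hom (G\<lparr>carrier := N\<rparr>) (G\<lparr>carrier := N\<rparr>)"
  proof (rule homI)
    fix x y assume "x \<in> carrier (G\<lparr>carrier := N\<rparr>)" "y \<in> carrier (G\<lparr>carrier := N\<rparr>)"
    then have "x \<in> carrier G" "y \<in> carrier G" using N_sub by auto
    then show "t \<otimes> (x \<otimes>\<^bsub>G\<lparr>carrier := N\<rparr>\<^esub> y) \<otimes> inv t =
        (t \<otimes> x \<otimes> inv t) \<otimes>\<^bsub>G\<lparr>carrier := N\<rparr>\<^esub> (t \<otimes> y \<otimes> inv t)"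
      using t by (simp add: m_assoc)
  qed (use conj_in t in auto)
  moreover have "inj_on (\<lambda>x. t \<otimes> x \<otimes> inv t) N"
    using t N_sub by (intro inj_onI) (meson conjugation_is_inj subsetD)
  moreover have "(\<lambda>x. t \<otimes> x \<otimes> inv t) ` N = N"
  proof
    show "(\<lambda>x. t \<otimes> x \<otimes> inv t) ` N \<subseteq> N" using conj_in t by auto
    show "N \<subseteq> (\<lambda>x. t \<otimes> x \<otimes> inv t) ` N"
    proof
      fix x assume x: "x \<in> N"
      then have "x = t \<otimes> (inv t \<otimes> x \<otimes> inv (inv t)) \<otimes> inv t"
        using t N_sub by (auto simp: m_assoc)
      then show "x \<in> (\<lambda>x. t \<otimes> x \<otimes> inv t) ` N"
        using conj_in[of "inv t" x] t x by blast
    qed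
  qed
  ultimately show ?thesis by (simp add: iso_def bij_betw_def)
qed

lemma (in normal) image_r_coset_automorphism:
  assumes \<sigma>: "\<sigma> \<in> iso G G" and stable: "\<And>x. x \<in> carrier G \<Longrightarrow> \<sigma> x \<in> H \<longleftrightarrow> x \<in> H"
    and a: "a \<in> carrier G"
  shows "\<sigma> ` (H #> a) = H #> \<sigma> a"
proof
  have hom: "\<sigma> \<in> hom G G"
    using \<sigma> by (simp add: iso_def)
  show "\<sigma> ` (H #> a) \<subseteq> H #> \<sigma> a"
  proof
    fix z assume "z \<in> \<sigma> ` (H #> a)"
    then obtain h where h: "h \<in> H" "z = \<sigma> (h \<otimes> a)" by (auto simp: r_coset_def)
    then have "z = \<sigma> h \<otimes> \<sigma> a" using hom a by (simp add: hom_mult)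
    moreover have "\<sigma> h \<in> H" using stable h by simp
    ultimately show "z \<in> H #> \<sigma> a" by (auto simp: r_coset_def)
  qed
  show "H #> \<sigma> a \<subseteq> \<sigma> ` (H #> a)"
  proof
    fix z assume "z \<in> H #> \<sigma> a"
    then obtain h where h: "h \<in> H" "z = h \<otimes> \<sigma> a" by (auto simp: r_coset_def)
    have "h \<in> \<sigma> ` carrier G"
      using \<sigma> h subset by (simp add: iso_def bij_betw_def)
    then obtain h' where h': "h' \<in> carrier G" "\<sigma> h' = h" by blast
    then have "h' \<in> H" using stable[OF h'(1)] h(1) by simp
    moreover have "z = \<sigma> (h' \<otimes> a)" using h h' hom a by (simp add: hom_mult)
    ultimately show "z \<in> \<sigma> ` (H #> a)" by (auto simp: r_coset_def)
  qed
qed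

lemma (in normal) FactGroup_automorphism:
  assumes \<sigma>: "\<sigma> \<in> iso G G" and stable: "\<And>x. x \<in> carrier G \<Longrightarrow> \<sigma> x \<in> H \<longleftrightarrow> x \<in> H"
  shows "(\<lambda>C. \<sigma> ` C) \<in> iso (G Mod H) (G Mod H)"
proof -
  have hom: "\<sigma> \<in> hom G G" and bij: "bij_betw \<sigma> (carrier G) (carrier G)"
    using \<sigma> by (auto simp: iso_def)
  note image_coset = image_r_coset_automorphism[OF \<sigma> stable]
  have closed: "\<sigma> x \<in> carrier G" if "x \<in> carrier G" for x
    using hom that by (simp add: hom_in_carrier)
  have hom_Mod: "(\<lambda>C. \<sigma> ` C) \<in> hom (G Mod H) (G Mod H)"
  proof (rule homI)
    fix C assume "C \<in> carrier (G Mod H)"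
    then obtain a where "a \<in> carrier G" "C = H #> a" by (auto simp: carrier_FactGroup)
    then show "\<sigma> ` C \<in> carrier (G Mod H)"
      using closed by (auto simp: carrier_FactGroup image_coset)
  next
    fix C D assume "C \<in> carrier (G Mod H)" "D \<in> carrier (G Mod H)"
    then obtain a b where ab: "a \<in> carrier G" "C = H #> a" "b \<in> carrier G" "D = H #> b"
      by (auto simp: carrier_FactGroup)
    then show "\<sigma> ` (C \<otimes>\<^bsub>G Mod H\<^esub> D) = \<sigma> ` C \<otimes>\<^bsub>G Mod H\<^esub> \<sigma> ` D"
      using closed by (simp add: rcos_sum image_coset hom_mult[OF hom])
  qed
  moreover have "inj_on (\<lambda>C. \<sigma> ` C) (carrier (G Mod H))"
  proof (rule inj_onI)
    fix C D assume "C \<in> carrier (G Mod H)" "D \<in> carrier (G Mod H)" and "\<sigma> ` C = \<sigma> ` D"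
    moreover have "C \<subseteq> carrier G" if "C \<in> carrier (G Mod H)" for C
      using that r_coset_subset_G[OF subset] by (auto simp: carrier_FactGroup)
    ultimately show "C = D"
      using inj_on_image_eq_iff[OF bij_betw_imp_inj_on[OF bij]] by metis
  qed
  moreover have "carrier (G Mod H) \<subseteq> (\<lambda>C. \<sigma> ` C) ` carrier (G Mod H)"
  proof
    fix C assume "C \<in> carrier (G Mod H)"
    then obtain a where a: "a \<in> carrier G" "C = H #> a" by (auto simp: carrier_FactGroup)
    then obtain b where b: "b \<in> carrier G" "a = \<sigma> b"
      using bij by (auto simp: bij_betw_def)
    then have "C = \<sigma> ` (H #> b)" using a image_coset by simp
    then show "C \<in> (\<lambda>C. \<sigma> ` C) ` carrier (G Mod H)"
      using b(1) by (auto simp: carrier_FactGroup)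
  qed
  ultimately show ?thesis
    using hom_carrier[OF hom_Mod] by (auto simp: iso_def bij_betw_def)
qed

context group
begin

context
  fixes N M t
  assumes N: "N \<lhd> G" and M: "M \<lhd> G" "M \<subseteq> N" and t: "t \<in> carrier G"
begin

lemma conj_FactGroup_automorphism:
  shows "(\<lambda>C. (\<lambda>x. t \<otimes> x \<otimes> inv t) ` C) \<in> iso (G\<lparr>carrier := N\<rparr> Mod M) (G\<lparr>carrier := N\<rparr> Mod M)"
    and "y \<in> N \<Longrightarrow> (\<lambda>x. t \<otimes> x \<otimes> inv t) ` (M #> y) = M #> (t \<otimes> y \<otimes> inv t)"
proof -
  interpret K: normal M "G\<lparr>carrier := N\<rparr>"
    using normal_restrict_supergroup[OF normal_imp_subgroup[OF N] M] .
  have N_carrier: "N \<subseteq> carrier G"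
    using N normal_imp_subgroup subgroup.subset by blast
  have stable: "t \<otimes> x \<otimes> inv t \<in> M \<longleftrightarrow> x \<in> M" if "x \<in> carrier (G\<lparr>carrier := N\<rparr>)" for x
    using conj_mem_normal_iff[OF M(1) t] that N_carrier by auto
  note \<sigma> = conj_iso_normal[OF N t]
  show "(\<lambda>C. (\<lambda>x. t \<otimes> x \<otimes> inv t) ` C) \<in> iso (G\<lparr>carrier := N\<rparr> Mod M) (G\<lparr>carrier := N\<rparr> Mod M)"
    using K.FactGroup_automorphism[OF \<sigma> stable] .
  show "(\<lambda>x. t \<otimes> x \<otimes> inv t) ` (M #> y) = M #> (t \<otimes> y \<otimes> inv t)" if "y \<in> N"
    using K.image_r_coset_automorphism[OF \<sigma> stable] that by simp
qed

lemma twisted_prod_FactGroup_conj: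
  assumes y: "y \<in> N"
  shows "twisted_prod (G\<lparr>carrier := N\<rparr> Mod M) (\<lambda>C. (\<lambda>x. t \<otimes> x \<otimes> inv t) ` C) k (M #> y)
    = M #> twisted_prod G (\<lambda>x. t \<otimes> x \<otimes> inv t) k y"
proof -
  interpret K: normal M "G\<lparr>carrier := N\<rparr>"
    using normal_restrict_supergroup[OF normal_imp_subgroup[OF N] M] .
  have hom: "(\<lambda>a. M #> a) \<in> hom (G\<lparr>carrier := N\<rparr>) (G\<lparr>carrier := N\<rparr> Mod M)"
    using K.r_coset_hom_Mod by simp
  have closed: "t \<otimes> x \<otimes> inv t \<in> carrier (G\<lparr>carrier := N\<rparr>)"
    if "x \<in> carrier (G\<lparr>carrier := N\<rparr>)" for x
    using normal.inv_op_closed2[OF N t] that by simp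
  have comm: "M #> (t \<otimes> x \<otimes> inv t) = (\<lambda>x. t \<otimes> x \<otimes> inv t) ` (M #> x)"
    if "x \<in> carrier (G\<lparr>carrier := N\<rparr>)" for x
    using conj_FactGroup_automorphism(2) that by simp
  show ?thesis
    using hom_twisted_prod[where \<phi>="\<lambda>C. (\<lambda>x. t \<otimes> x \<otimes> inv t) ` C",
        OF K.is_group K.factorgroup_is_group hom closed comm] y
    by simp
qed

lemma conj_FactGroup_funpow:
  assumes "t [^] n = \<one>"
  shows "\<forall>C\<in>carrier (G\<lparr>carrier := N\<rparr> Mod M). ((\<lambda>C. (\<lambda>x. t \<otimes> x \<otimes> inv t) ` C) ^^ n) C = C"
proof
  fix C assume "C \<in> carrier (G\<lparr>carrier := N\<rparr> Mod M)"
  then obtain y where y: "y \<in> N" "C = M #> y"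
    by (auto simp: carrier_FactGroup)
  have N_carrier: "N \<subseteq> carrier G"
    using N normal_imp_subgroup subgroup.subset by blast
  have "M #> ((\<lambda>x. t \<otimes> x \<otimes> inv t) ^^ n) y = ((\<lambda>C. (\<lambda>x. t \<otimes> x \<otimes> inv t) ` C) ^^ n) (M #> y)"
    by (rule funpow_commute_on[where A=N])
      (use normal.inv_op_closed2[OF N t] conj_FactGroup_automorphism(2) y(1) in auto)
  then have "((\<lambda>C. (\<lambda>x. t \<otimes> x \<otimes> inv t) ` C) ^^ n) C = M #> ((\<lambda>x. t \<otimes> x \<otimes> inv t) ^^ n) y"
    using y(2) by simp
  also have "((\<lambda>x. t \<otimes> x \<otimes> inv t) ^^ n) y = y"
    using conj_funpow[OF t] assms y(1) N_carrier by auto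
  finally show "((\<lambda>C. (\<lambda>x. t \<otimes> x \<otimes> inv t) ` C) ^^ n) C = C"
    using y(2) by simp
qed

lemma pow_mult_mem_iff_X_twisted:
  assumes "t [^] n = \<one>" and y: "y \<in> N"
  shows "(y \<otimes> t) [^] n \<in> M \<longleftrightarrow>
    M #> y \<in> X_twisted (G\<lparr>carrier := N\<rparr> Mod M) (\<lambda>C. (\<lambda>x. t \<otimes> x \<otimes> inv t) ` C) n"
proof -
  have y_carrier: "y \<in> carrier G"
    using N y normal_imp_subgroup subgroup.subset by blast
  have "M #> y \<in> carrier (G\<lparr>carrier := N\<rparr> Mod M)"
    using y by (auto simp: carrier_FactGroup)
  moreover have "M #> a = M \<longleftrightarrow> a \<in> M" if "a \<in> carrier G" for a
    using coset_join1[OF _ that] coset_join2[OF that] normal_imp_subgroup[OF M(1)] by blast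
  ultimately show ?thesis
    using twisted_prod_FactGroup_conj[OF y] twisted_prod_conj_closed[OF t y_carrier]
      pow_mult_eq_twisted_prod_if_pow_eq_one[OF t y_carrier assms(1)]
    by (auto simp: X_twisted_def)
qed

lemma r_coset_FactGroup_in_rcosets:
  assumes "C \<in> carrier (G\<lparr>carrier := N\<rparr> Mod M)"
  shows "C #> t \<in> rcosets M"
proof -
  have M_carrier: "M \<subseteq> carrier G"
    using M(1) normal_imp_subgroup subgroup.subset by blast
  obtain y where "y \<in> N" "C = M #> y"
    using assms by (auto simp: carrier_FactGroup)
  moreover have "y \<in> carrier G" if "y \<in> N" for y
    using N that normal_imp_subgroup subgroup.subset by blast
  ultimately show ?thesis
    using t rcosetsI[OF M_carrier] by (auto simp: coset_mult_assoc[OF M_carrier])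
qed

lemma pow_eq_one_r_coset_subset_Union:
  assumes "t [^] n = \<one>"
  shows "{x \<in> carrier G. x [^] n = \<one>} \<inter> (N #> t) \<subseteq>
    (\<Union>C \<in> X_twisted (G\<lparr>carrier := N\<rparr> Mod M) (\<lambda>C. (\<lambda>x. t \<otimes> x \<otimes> inv t) ` C) n. C #> t)"
proof
  fix z assume z: "z \<in> {x \<in> carrier G. x [^] n = \<one>} \<inter> (N #> t)"
  then obtain y where y: "y \<in> N" "z = y \<otimes> t"
    by (auto simp: r_coset_def)
  then have "y \<in> carrier G"
    using N normal_imp_subgroup subgroup.subset by blast
  then have "y \<in> M #> y"
    using rcos_self normal_imp_subgroup[OF M(1)] by blast
  then have "z \<in> (M #> y) #> t"
    using y(2) unfolding r_coset_def by blast
  moreover have "M #> y \<in> X_twisted (G\<lparr>carrier := N\<rparr> Mod M) (\<lambda>C. (\<lambda>x. t \<otimes> x \<otimes> inv t) ` C) n"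
    using pow_mult_mem_iff_X_twisted[OF assms y(1)] z y subgroup.one_closed[OF normal_imp_subgroup[OF M(1)]]
    by simp
  ultimately show "z \<in> (\<Union>C \<in> X_twisted (G\<lparr>carrier := N\<rparr> Mod M) (\<lambda>C. (\<lambda>x. t \<otimes> x \<otimes> inv t) ` C) n. C #> t)"
    by blast
qed

end

end

section \<open>Stabilisers under right multiplication\<close>

context group
begin

lemma subgroup_r_coset_stabilizer:
  assumes "\<And>C. C \<in> \<C> \<Longrightarrow> C \<subseteq> carrier G"
  shows "subgroup {g \<in> carrier G. \<forall>C\<in>\<C>. C #> g = C} G"
proof (rule subgroupI)
  show "{g \<in> carrier G. \<forall>C\<in>\<C>. C #> g = C} \<noteq> {}"
    using assms by (auto intro!: exI[of _ \<one>])
next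
  fix a assume a: "a \<in> {g \<in> carrier G. \<forall>C\<in>\<C>. C #> g = C}"
  have "C #> inv a = C" if C: "C \<in> \<C>" for C
  proof -
    have "C #> inv a = (C #> a) #> inv a" using a C by simp
    also have "\<dots> = C #> (a \<otimes> inv a)" using a C assms by (intro coset_mult_assoc) auto
    finally show ?thesis using a C assms by simp
  qed
  then show "inv a \<in> {g \<in> carrier G. \<forall>C\<in>\<C>. C #> g = C}"
    using a by simp
next
  fix a b assume "a \<in> {g \<in> carrier G. \<forall>C\<in>\<C>. C #> g = C}" "b \<in> {g \<in> carrier G. \<forall>C\<in>\<C>. C #> g = C}"
  then show "a \<otimes> b \<in> {g \<in> carrier G. \<forall>C\<in>\<C>. C #> g = C}"
    using assms by (simp add: coset_mult_assoc[symmetric])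
qed auto

lemma r_coset_eq_selfI:
  assumes K: "K \<subseteq> carrier G" and g: "g \<in> carrier G"
    and "\<And>k. k \<in> K \<Longrightarrow> k \<otimes> g \<in> K" and "\<And>k. k \<in> K \<Longrightarrow> k \<otimes> inv g \<in> K"
  shows "K #> g = K"
proof
  show "K #> g \<subseteq> K"
    using assms(3) by (auto simp: r_coset_def)
  show "K \<subseteq> K #> g"
  proof
    fix k assume k: "k \<in> K"
    then have "k = (k \<otimes> inv g) \<otimes> g"
      using K g by (auto simp: m_assoc)
    then show "k \<in> K #> g"
      using assms(4)[OF k] unfolding r_coset_def by blast
  qed
qed

lemma rcosets_kernel:
  assumes H: "subgroup H G"
  shows "{g \<in> carrier G. \<forall>C\<in>rcosets H. C #> g = C} \<lhd> G"
    and "{g \<in> carrier G. \<forall>C\<in>rcosets H. C #> g = C} \<subseteq> H"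
proof -
  let ?N = "{g \<in> carrier G. \<forall>C\<in>rcosets H. C #> g = C}"
  have cosets_carrier: "C \<subseteq> carrier G" if "C \<in> rcosets H" for C
    using subgroup.rcosets_carrier[OF H is_group that] .
  have "x \<otimes> g \<otimes> inv x \<in> ?N" if x: "x \<in> carrier G" and g: "g \<in> ?N" for x g
  proof -
    have "C #> (x \<otimes> g \<otimes> inv x) = C" if C: "C \<in> rcosets H" for C
    proof -
      obtain a where a: "a \<in> carrier G" "C = H #> a"
        using C by (auto simp: RCOSETS_def)
      then have "C #> x = H #> (a \<otimes> x)"
        using x coset_mult_assoc[OF subgroup.subset[OF H]] by simp
      then have Cx: "C #> x \<in> rcosets H"
        using a x rcosetsI[OF subgroup.subset[OF H]] by simp
      have "C #> (x \<otimes> g \<otimes> inv x) = ((C #> x) #> g) #> inv x"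
        using C x g cosets_carrier r_coset_subset_G by (simp add: coset_mult_assoc)
      also have "\<dots> = C"
        using Cx g C x cosets_carrier by (simp add: coset_mult_assoc)
      finally show ?thesis .
    qed
    then show ?thesis using x g by simp
  qed
  then show "?N \<lhd> G"
    using subgroup_r_coset_stabilizer[OF cosets_carrier] by (simp add: normal_inv_iff)
  show "?N \<subseteq> H"
  proof
    fix g assume g: "g \<in> ?N"
    then have "H #> g = H" and g_carrier: "g \<in> carrier G"
      using subgroup.subgroup_in_rcosets[OF H is_group] by auto
    then show "g \<in> H"
      using rcos_self[OF g_carrier H] by simp
  qed
qed

end

section \<open>Profinite groups\<close>

locale profinite = group G for G :: "('a, 'b) monoid_scheme" (structure) +
  fixes T :: "'a topology"
  assumes profinite_group: "profinite_group G T"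
begin

lemma topspace_eq [simp]: "topspace T = carrier G"
  using profinite_group by (simp add: profinite_group_def topological_group_def)

lemma compact_space: "compact_space T"
  using profinite_group by (simp add: profinite_group_def)

lemma Hausdorff_space: "Hausdorff_space T"
  using profinite_group by (simp add: profinite_group_def)

lemma continuous_map_inv: "continuous_map T T (\<lambda>x. inv x)"
  using profinite_group by (simp add: profinite_group_def topological_group_def)

lemma continuous_map_prod_mult: "continuous_map (prod_topology T T) T (\<lambda>(x, y). x \<otimes> y)"
  using profinite_group by (simp add: profinite_group_def topological_group_def)

lemma continuous_map_mult:
  assumes "continuous_map T T f" "continuous_map T T g"
  shows "continuous_map T T (\<lambda>x. f x \<otimes> g x)"
  using continuous_map_compose[OF continuous_map_pairedI[OF assms] continuous_map_prod_mult]
  by (simp add: o_def)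

lemma continuous_map_pow: "continuous_map T T (\<lambda>x. x [^] (k::nat))"
  by (induction k) (simp_all add: continuous_map_mult continuous_map_id[unfolded id_def])

lemma continuous_map_translations:
  assumes "g \<in> carrier G"
  shows "continuous_map T T (\<lambda>x. g \<otimes> x)" and "continuous_map T T (\<lambda>x. x \<otimes> g)"
  using assms continuous_map_mult[of "\<lambda>x. g" "\<lambda>x. x"] continuous_map_mult[of "\<lambda>x. x" "\<lambda>x. g"]
  by (simp_all add: continuous_map_id[unfolded id_def])

lemma continuous_map_conj:
  assumes "a \<in> carrier G"
  shows "continuous_map T T (\<lambda>x. a \<otimes> x \<otimes> inv a)"
  using assms continuous_map_translations(2)[of "inv a"] continuous_map_translations(1)[of a]
  by (auto intro: continuous_map_compose[unfolded o_def])

lemma closedin_singleton: "x \<in> carrier G \<Longrightarrow> closedin T {x}"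
  using Hausdorff_imp_t1_space[OF Hausdorff_space] by (simp add: t1_space_closedin_singleton)

lemma closedin_pow_eq_one: "closedin T {x \<in> carrier G. x [^] (n::nat) = \<one>}"
proof -
  have "closedin T {\<one>}"
    by (simp add: closedin_singleton)
  from closedin_continuous_map_preimage[OF continuous_map_pow this] show ?thesis
    by simp
qed

lemma openin_subset_carrier: "openin T U \<Longrightarrow> U \<subseteq> carrier G"
  using openin_subset by fastforce

lemma openin_l_coset:
  assumes U: "openin T U" and g: "g \<in> carrier G"
  shows "openin T (g <# U)"
proof -
  have "g <# U = {x \<in> topspace T. inv g \<otimes> x \<in> U}"
    using openin_subset_carrier[OF U] g by (force simp: l_coset_def)
  then show ?thesis
    using openin_continuous_map_preimage[OF continuous_map_translations(1) U] g by simp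
qed

lemma openin_r_coset:
  assumes U: "openin T U" and g: "g \<in> carrier G"
  shows "openin T (U #> g)"
proof -
  have "U #> g = {x \<in> topspace T. x \<otimes> inv g \<in> U}"
    using openin_subset_carrier[OF U] g by (force simp: r_coset_def m_assoc)
  then show ?thesis
    using openin_continuous_map_preimage[OF continuous_map_translations(2) U] g by simp
qed

lemma openin_subgroup_if_nbhd:
  assumes H: "subgroup H G" and W: "openin T W" "\<one> \<in> W" "W \<subseteq> H"
  shows "openin T H"
proof (subst openin_subopen, intro ballI)
  fix h assume h: "h \<in> H"
  then have "h \<in> carrier G" using H subgroup.subset by blast
  then have "openin T (h <# W)" "h \<in> h <# W"
    using openin_l_coset[OF W(1)] W(2) by (force simp: l_coset_def)+
  moreover have "h <# W \<subseteq> H"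
    using H h W(3) by (auto simp: l_coset_def subgroup.m_closed)
  ultimately show "\<exists>U. openin T U \<and> h \<in> U \<and> U \<subseteq> H" by blast
qed

lemma finite_rcosets_open_subgroup:
  assumes H: "subgroup H G" "openin T H"
  shows "finite (rcosets H)"
proof -
  have compact: "compactin T (carrier G)"
    using compact_space by (simp add: compact_space_def)
  have "openin T C" if "C \<in> rcosets H" for C
    using openin_r_coset[OF H(2)] that by (auto simp: RCOSETS_def)
  moreover have "carrier G \<subseteq> \<Union>(rcosets H)"
    using rcosets_part_G[OF H(1)] by simp
  ultimately have "\<exists>\<F>. finite \<F> \<and> \<F> \<subseteq> rcosets H \<and> carrier G \<subseteq> \<Union>\<F>"
    by (rule compactinD[OF compact])
  then obtain \<F> where \<F>: "finite \<F>" "\<F> \<subseteq> rcosets H" "carrier G \<subseteq> \<Union>\<F>"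
    by blast
  have "rcosets H \<subseteq> \<F>"
  proof
    fix C assume C: "C \<in> rcosets H"
    then obtain g where g: "g \<in> carrier G" "g \<in> C"
      using rcos_self[OF _ H(1)] by (auto simp: RCOSETS_def)
    then obtain D where D: "D \<in> \<F>" "g \<in> D" using \<F>(3) by blast
    then have "D \<in> rcosets H" using \<F>(2) by blast
    then have "C = D"
      using rcos_disjoint[OF H(1)] C g(2) D(2) by (meson disjnt_iff pairwise_def)
    then show "C \<in> \<F>" using D(1) by simp
  qed
  then show ?thesis using \<F>(1) finite_subset by blast
qed

lemma finite_carrier_FactGroup:
  assumes M: "M \<lhd> G" "openin T M" and N: "N \<subseteq> carrier G"
  shows "finite (carrier (G\<lparr>carrier := N\<rparr> Mod M))"
proof -
  have "carrier (G\<lparr>carrier := N\<rparr> Mod M) \<subseteq> rcosets M"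
    using N by (auto simp: carrier_FactGroup RCOSETS_def)
  then show ?thesis
    using finite_rcosets_open_subgroup[OF normal_imp_subgroup[OF M(1)] M(2)] finite_subset by blast
qed

lemma clopen_nbhd_one:
  assumes "openin T V" "\<one> \<in> V"
  obtains K where "openin T K" "closedin T K" "\<one> \<in> K" "K \<subseteq> V"
proof -
  have "{\<one>} \<in> connected_components_of T"
    using profinite_group unfolding connected_components_of_def profinite_group_def by force
  then have "separated_between T {\<one>} (topspace T - V)"
  proof (rule separated_between_compact_connected_component[OF
        compact_imp_locally_compact_space[OF compact_space] Hausdorff_space])
    show "closedin T (topspace T - V)"
      using closedin_diff[OF closedin_topspace assms(1)] .
  qed (use assms(2) in auto)
  then obtain U W where UW: "openin T U" "openin T W" "U \<union> W = topspace T" "disjnt U W"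
      "\<one> \<in> U" "topspace T - V \<subseteq> W"
    unfolding separated_between_def by blast
  then have "U = topspace T - W"
    unfolding disjnt_def by blast
  then have "closedin T U"
    using closedin_diff[OF closedin_topspace UW(2)] by simp
  moreover have "U \<subseteq> V"
    using UW unfolding disjnt_def by blast
  ultimately show thesis
    using that UW by blast
qed

lemma exists_nbhd_one_mult_subset:
  assumes K: "compactin T K" and U: "openin T U" "K \<subseteq> U"
  obtains B where "openin T B" "\<one> \<in> B" "\<And>k b. k \<in> K \<Longrightarrow> b \<in> B \<Longrightarrow> k \<otimes> b \<in> U"
proof -
  let ?W = "{p \<in> topspace (prod_topology T T). (\<lambda>(x, y). x \<otimes> y) p \<in> U}"
  have W: "openin (prod_topology T T) ?W"
    using openin_continuous_map_preimage[OF continuous_map_prod_mult U(1)] .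
  have one: "\<one> \<in> topspace T" by simp
  have "K \<subseteq> carrier G"
    using U openin_subset_carrier by blast
  then have "K \<times> {\<one>} \<subseteq> ?W"
    using U(2) by (auto simp: subset_iff)
  then have "\<exists>A B. openin T A \<and> openin T B \<and> K \<subseteq> A \<and> \<one> \<in> B \<and> A \<times> B \<subseteq> ?W"
    by (rule tube_lemma_left[OF W K one])
  then obtain A B where AB: "openin T B" "\<one> \<in> B" "K \<subseteq> A" "A \<times> B \<subseteq> ?W"
    by blast
  show thesis
  proof (rule that[OF AB(1,2)])
    fix k b assume "k \<in> K" "b \<in> B"
    then have "(k, b) \<in> ?W" using AB(3,4) by blast
    then show "k \<otimes> b \<in> U" by simp
  qed
qed

lemma exists_open_subgroup_subset:
  assumes V: "openin T V" "\<one> \<in> V"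
  obtains H where "subgroup H G" "openin T H" "H \<subseteq> V"
proof -
  obtain K where K: "openin T K" "closedin T K" "\<one> \<in> K" "K \<subseteq> V"
    using clopen_nbhd_one[OF V] .
  have K_carrier: "K \<subseteq> carrier G"
    using openin_subset_carrier[OF K(1)] .
  obtain B where B: "openin T B" "\<one> \<in> B" "\<And>k b. k \<in> K \<Longrightarrow> b \<in> B \<Longrightarrow> k \<otimes> b \<in> K"
    using exists_nbhd_one_mult_subset[OF closedin_compact_space[OF compact_space K(2)] K(1)] by blast
  define W where "W = {x \<in> B. inv x \<in> B}"
  have "W = B \<inter> {x \<in> topspace T. inv x \<in> B}"
    using openin_subset_carrier[OF B(1)] unfolding W_def by auto
  then have W_open: "openin T W"
    using openin_continuous_map_preimage[OF continuous_map_inv B(1)] B(1) by auto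
  define S where "S = {g \<in> carrier G. \<forall>C\<in>{K}. C #> g = C}"
  have S: "subgroup S G"
    unfolding S_def using K_carrier by (intro subgroup_r_coset_stabilizer) auto
  have "W \<subseteq> S"
  proof
    fix w assume w: "w \<in> W"
    then have "w \<in> carrier G"
      using openin_subset_carrier[OF B(1)] by (auto simp: W_def)
    then show "w \<in> S"
      using r_coset_eq_selfI[OF K_carrier] B(3) w by (auto simp: S_def W_def)
  qed
  moreover have "S \<subseteq> K"
  proof
    fix h assume "h \<in> S"
    then have "h \<in> carrier G" "K #> h = K"
      by (auto simp: S_def)
    then show "h \<in> K"
      using rcosI[OF K(3) K_carrier] by force
  qed
  moreover have "\<one> \<in> W"
    using B(2) by (simp add: W_def)
  ultimately show thesis
    using that S openin_subgroup_if_nbhd[OF S W_open] K(4) by blast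
qed

lemma openin_r_coset_stabilizer:
  assumes H: "subgroup H G" "openin T H" and C: "C \<in> rcosets H"
  shows "openin T {g \<in> carrier G. C #> g = C}"
proof -
  obtain a where a: "a \<in> carrier G" "C = H #> a"
    using C by (auto simp: RCOSETS_def)
  have H_carrier: "H \<subseteq> carrier G"
    using H(1) subgroup.subset by blast
  have stab: "subgroup {g \<in> carrier G. C #> g = C} G"
    using subgroup_r_coset_stabilizer[of "{C}"] a H_carrier r_coset_subset_G by simp
  define W where "W = {g \<in> topspace T. a \<otimes> g \<otimes> inv a \<in> H}"
  have "openin T W"
    unfolding W_def using openin_continuous_map_preimage[OF continuous_map_conj[OF a(1)] H(2)] .
  moreover have "\<one> \<in> W"
    using a H(1) by (simp add: W_def subgroup.one_closed)
  moreover have "W \<subseteq> {g \<in> carrier G. C #> g = C}"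
  proof
    fix g assume g: "g \<in> W"
    then have g_carrier: "g \<in> carrier G" and conj_in: "a \<otimes> g \<otimes> inv a \<in> H"
      by (auto simp: W_def)
    have "C #> g = H #> ((a \<otimes> g \<otimes> inv a) \<otimes> a)"
      using a g_carrier H_carrier by (simp add: coset_mult_assoc m_assoc)
    also have "\<dots> = (H #> (a \<otimes> g \<otimes> inv a)) #> a"
      using a g_carrier H_carrier by (simp add: coset_mult_assoc)
    also have "\<dots> = C"
      using a conj_in H(1) g_carrier by (simp add: coset_join2)
    finally show "g \<in> {g \<in> carrier G. C #> g = C}"
      using g_carrier by simp
  qed
  ultimately show ?thesis
    using openin_subgroup_if_nbhd[OF stab] by blast
qed

lemma exists_open_normal_subset:
  assumes V: "openin T V" "\<one> \<in> V"
  obtains N where "N \<lhd> G" "openin T N" "N \<subseteq> V"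
proof -
  obtain H where H: "subgroup H G" "openin T H" "H \<subseteq> V"
    using exists_open_subgroup_subset[OF V] .
  let ?\<F> = "insert (carrier G) ((\<lambda>C. {g \<in> carrier G. C #> g = C}) ` (rcosets H))"
  have "openin T (\<Inter>?\<F>)"
  proof (rule openin_Inter)
    show "finite ?\<F>"
      using finite_rcosets_open_subgroup[OF H(1,2)] by simp
    fix U assume "U \<in> ?\<F>"
    then show "openin T U"
      using openin_r_coset_stabilizer[OF H(1,2)] openin_topspace[of T] by auto
  qed simp
  moreover have "\<Inter>?\<F> = {g \<in> carrier G. \<forall>C\<in>rcosets H. C #> g = C}"
    by auto
  ultimately show thesis
    using that rcosets_kernel[OF H(1)] H(3) by auto
qed

lemma exists_open_normal_not_mem:
  assumes "g \<in> carrier G" "g \<noteq> \<one>"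
  obtains N where "N \<lhd> G" "openin T N" "g \<notin> N"
proof -
  have "closedin T {g}"
    using closedin_singleton assms(1) .
  then have "openin T (carrier G - {g})"
    by (simp add: closedin_def)
  then show thesis
    using exists_open_normal_subset[of "carrier G - {g}"] that assms by blast
qed

lemma eq_one_if_mem_open_normal_subgroups:
  assumes x: "x \<in> carrier G" and N: "N \<lhd> G" "openin T N"
    and mem: "\<And>M. M \<lhd> G \<Longrightarrow> openin T M \<Longrightarrow> M \<subseteq> N \<Longrightarrow> x \<in> M"
  shows "x = \<one>"
proof (rule ccontr)
  assume "x \<noteq> \<one>"
  then obtain M where M: "M \<lhd> G" "openin T M" "x \<notin> M"
    using exists_open_normal_not_mem[OF x] by blast
  have "M \<inter> N \<lhd> G"
    using M(1) N(1) by (simp add: normal_inv_iff subgroups_Inter_pair)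
  moreover have "openin T (M \<inter> N)"
    using M(2) N(2) by (rule openin_Int)
  ultimately have "x \<in> M \<inter> N"
    using mem by blast
  then show False
    using M(3) by blast
qed

lemma exists_open_normal_l_coset_subset:
  assumes K: "compactin T K" and U: "openin T U" "K \<subseteq> U"
  obtains N where "N \<lhd> G" "openin T N" "\<And>x. x \<in> K \<Longrightarrow> x <# N \<subseteq> U"
proof -
  obtain B where B: "openin T B" "\<one> \<in> B" "\<And>k b. k \<in> K \<Longrightarrow> b \<in> B \<Longrightarrow> k \<otimes> b \<in> U"
    using exists_nbhd_one_mult_subset[OF assms] by blast
  obtain N where N: "N \<lhd> G" "openin T N" "N \<subseteq> B"
    using exists_open_normal_subset[OF B(1,2)] .
  have "x <# N \<subseteq> U" if "x \<in> K" for x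
    using that B(3) N(3) by (auto simp: l_coset_def)
  then show thesis using that N(1,2) by blast
qed

end

section \<open>Haar measure\<close>

locale haar = profinite +
  fixes \<mu> :: "'a measure"
  assumes haar_measure: "haar_measure G T \<mu>"
begin

lemma finite_measure: "finite_measure \<mu>"
  using haar_measure by (simp add: haar_measure_def prob_space_def)

lemma space_eq: "space \<mu> = carrier G"
  using haar_measure by (simp add: haar_measure_def)

lemma emeasure_l_translate:
  "g \<in> carrier G \<Longrightarrow> A \<in> sets \<mu> \<Longrightarrow> emeasure \<mu> ((\<lambda>x. g \<otimes> x) ` A) = emeasure \<mu> A"
  using haar_measure unfolding haar_measure_def by blast

lemma outer_regular:
  "A \<in> sets \<mu> \<Longrightarrow> emeasure \<mu> A = (INF U\<in>{U. openin T U \<and> A \<subseteq> U}. emeasure \<mu> U)"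
  using haar_measure unfolding haar_measure_def by blast

lemma sets_openin: "openin T U \<Longrightarrow> U \<in> sets \<mu>"
proof -
  assume "openin T U"
  have "sets \<mu> = sets (borel_of T)"
    using haar_measure by (simp add: haar_measure_def)
  also have "\<dots> = sigma_sets (topspace T) {U. openin T U}"
    unfolding borel_of_def by (rule sets_measure_of) (use openin_subset in blast)
  finally show ?thesis
    using \<open>openin T U\<close> by auto
qed

lemma sets_closedin: "closedin T C \<Longrightarrow> C \<in> sets \<mu>"
proof -
  assume C: "closedin T C"
  then have "openin T (topspace T - C)"
    by (simp add: closedin_def)
  then have "space \<mu> - (topspace T - C) \<in> sets \<mu>"
    using sets_openin by blast
  moreover have "space \<mu> - (topspace T - C) = C"
    using closedin_subset[OF C] space_eq by auto
  ultimately show ?thesis by simp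
qed

lemma measure_l_coset:
  assumes "g \<in> carrier G" "A \<in> sets \<mu>"
  shows "measure \<mu> (g <# A) = measure \<mu> A"
proof -
  have "g <# A = (\<lambda>x. g \<otimes> x) ` A" by (auto simp: l_coset_def)
  then show ?thesis
    using emeasure_l_translate[OF assms] by (simp add: measure_def)
qed

lemma measure_rcosets_normal:
  assumes N: "N \<lhd> G" "openin T N" and C: "C \<in> rcosets N"
  shows "C \<in> sets \<mu>" and "measure \<mu> C = measure \<mu> N"
proof -
  obtain g where g: "g \<in> carrier G" "C = N #> g"
    using C by (auto simp: RCOSETS_def)
  then have "C = g <# N"
    using normal.coset_eq[OF N(1)] by simp
  then show "C \<in> sets \<mu>" "measure \<mu> C = measure \<mu> N"
    using measure_l_coset[OF g(1) sets_openin[OF N(2)]] sets_openin[OF openin_l_coset[OF N(2) g(1)]]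
    by simp_all
qed

lemma measure_Union_rcosets:
  assumes N: "N \<lhd> G" "openin T N" and \<C>: "\<C> \<subseteq> rcosets N"
  shows "measure \<mu> (\<Union>\<C>) = card \<C> * measure \<mu> N"
proof -
  have subgroup: "subgroup N G"
    using N(1) normal_imp_subgroup by blast
  have "finite \<C>"
    using finite_rcosets_open_subgroup[OF subgroup N(2)] \<C> finite_subset by blast
  moreover have "disjoint_family_on (\<lambda>C. C) \<C>"
    using rcos_disjoint[OF subgroup] \<C> unfolding disjoint_family_on_def pairwise_def disjnt_def
    by (meson subsetD)
  ultimately have "measure \<mu> (\<Union>C\<in>\<C>. C) = (\<Sum>C\<in>\<C>. measure \<mu> C)"
    using measure_rcosets_normal(1)[OF N] \<C>
    by (intro finite_measure.finite_measure_finite_Union[OF finite_measure]) auto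
  also have "\<dots> = card \<C> * measure \<mu> N"
    using measure_rcosets_normal(2)[OF N] \<C> by (simp add: subset_iff)
  finally show ?thesis by simp
qed

lemma exists_openin_superset_measure_less:
  assumes A: "A \<in> sets \<mu>" and r: "measure \<mu> A < r"
  obtains U where "openin T U" "A \<subseteq> U" "measure \<mu> U < r"
proof -
  have "0 < r"
    using r measure_nonneg[of \<mu> A] by linarith
  then have "emeasure \<mu> A < ennreal r"
    using r finite_measure.emeasure_eq_measure[OF finite_measure, of A]
    by (simp add: ennreal_lessI)
  then have "(INF U\<in>{U. openin T U \<and> A \<subseteq> U}. emeasure \<mu> U) < ennreal r"
    using outer_regular[OF A] by simp
  then obtain U where U: "openin T U" "A \<subseteq> U" "emeasure \<mu> U < ennreal r"
    unfolding INF_less_iff by blast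
  then have "measure \<mu> U < r"
    using finite_measure.emeasure_eq_measure[OF finite_measure, of U] by (simp add: ennreal_less_iff)
  then show thesis using that U(1,2) by blast
qed

lemma measure_le_sum_Int_rcosets:
  assumes N: "N \<lhd> G" "openin T N" and A: "A \<in> sets \<mu>" "A \<subseteq> \<Union>\<C>" and \<C>: "\<C> \<subseteq> rcosets N"
  shows "measure \<mu> A \<le> (\<Sum>C\<in>\<C>. measure \<mu> (A \<inter> C))"
proof -
  have "finite \<C>"
    using finite_rcosets_open_subgroup[OF normal_imp_subgroup[OF N(1)] N(2)] \<C> finite_subset by blast
  moreover have "(\<lambda>C. A \<inter> C) ` \<C> \<subseteq> sets \<mu>"
    using A(1) measure_rcosets_normal(1)[OF N] \<C> by blast
  moreover have "(\<Union>C\<in>\<C>. A \<inter> C) = A"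
    using A(2) by blast
  ultimately show ?thesis
    using finite_measure.finite_measure_subadditive_finite[OF finite_measure] by metis
qed

lemma measure_le_if_sparse_in_r_cosets:
  assumes c: "0 \<le> c" and N: "N \<lhd> G" "openin T N" and A: "A \<in> sets \<mu>" "A \<subseteq> carrier G"
    and U: "openin T U" "\<And>x. x \<in> A \<Longrightarrow> x <# N \<subseteq> U"
    and sparse: "\<And>g. g \<in> carrier G \<Longrightarrow> measure \<mu> (A \<inter> (N #> g)) \<le> c * measure \<mu> N"
  shows "measure \<mu> A \<le> c * measure \<mu> U"
proof -
  have subgroup: "subgroup N G"
    using N(1) normal_imp_subgroup by blast
  define \<C> where "\<C> = {C \<in> rcosets N. C \<inter> A \<noteq> {}}"
  have "A \<subseteq> \<Union>\<C>"
  proof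
    fix x assume x: "x \<in> A"
    then have "x \<in> N #> x" "N #> x \<in> rcosets N"
      using A(2) rcos_self[OF _ subgroup] rcosetsI[OF subgroup.subset[OF subgroup]] by auto
    then show "x \<in> \<Union>\<C>"
      using x unfolding \<C>_def by blast
  qed
  have "C \<subseteq> U" if C: "C \<in> \<C>" for C
  proof -
    obtain g where g: "g \<in> carrier G" "C = N #> g" and "C \<inter> A \<noteq> {}"
      using C by (auto simp: \<C>_def RCOSETS_def)
    then obtain x where x: "x \<in> C" "x \<in> A" by blast
    have "C = N #> x"
      using x(1) g(2) repr_independence[OF _ g(1) subgroup] by simp
    also have "\<dots> = x <# N"
      using normal.coset_eq[OF N(1)] x(2) A(2) by auto
    finally show ?thesis
      using U(2)[OF x(2)] by simp
  qed
  have "measure \<mu> A \<le> (\<Sum>C\<in>\<C>. measure \<mu> (A \<inter> C))"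
    using \<open>A \<subseteq> \<Union>\<C>\<close> by (intro measure_le_sum_Int_rcosets[OF N A(1)]) (auto simp: \<C>_def)
  also have "\<dots> \<le> (\<Sum>C\<in>\<C>. c * measure \<mu> N)"
    using sparse by (intro sum_mono) (auto simp: \<C>_def RCOSETS_def)
  also have "\<dots> = c * measure \<mu> (\<Union>\<C>)"
    using measure_Union_rcosets[OF N, of \<C>] by (simp add: \<C>_def)
  also have "\<dots> \<le> c * measure \<mu> U"
    using c \<open>\<And>C. C \<in> \<C> \<Longrightarrow> C \<subseteq> U\<close> sets_openin[OF U(1)]
    by (intro mult_left_mono finite_measure.finite_measure_mono[OF finite_measure]) auto
  finally show ?thesis .
qed

lemma exists_dense_r_coset:
  assumes c: "0 \<le> c" "c < 1" and A: "closedin T A" "0 < measure \<mu> A"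
  obtains N t where "N \<lhd> G" "openin T N" "t \<in> A"
    "c * measure \<mu> N < measure \<mu> (A \<inter> (N #> t))"
proof -
  define d where "d = (1 + c) / 2"
  have d: "0 < d" "c \<le> d" "d < 1"
    using c by (auto simp: d_def)
  have "measure \<mu> A < measure \<mu> A / d"
    using A(2) d by (simp add: less_divide_eq)
  then obtain U where U: "openin T U" "A \<subseteq> U" "measure \<mu> U < measure \<mu> A / d"
    using exists_openin_superset_measure_less[OF sets_closedin[OF A(1)]] by blast
  obtain N where N: "N \<lhd> G" "openin T N" and N_U: "\<And>x. x \<in> A \<Longrightarrow> x <# N \<subseteq> U"
    using exists_open_normal_l_coset_subset[OF closedin_compact_space[OF compact_space A(1)] U(1,2)]
    by blast
  have "\<exists>g\<in>carrier G. c * measure \<mu> N < measure \<mu> (A \<inter> (N #> g))"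
  proof (rule ccontr)
    assume "\<not> ?thesis"
    then have "measure \<mu> A \<le> c * measure \<mu> U"
      using closedin_subset[OF A(1)]
      by (intro measure_le_if_sparse_in_r_cosets[OF c(1) N sets_closedin[OF A(1)] _ U(1) N_U])
        (auto simp: not_less)
    also have "\<dots> \<le> d * measure \<mu> U"
      using d(2) by (simp add: mult_right_mono)
    also have "\<dots> < measure \<mu> A"
      using U(3) d(1) by (simp add: less_divide_eq mult.commute)
    finally show False by simp
  qed
  then obtain g where g: "g \<in> carrier G" and dense: "c * measure \<mu> N < measure \<mu> (A \<inter> (N #> g))"
    by blast
  moreover have "0 \<le> c * measure \<mu> N"
    using c(1) by simp
  ultimately obtain t where t: "t \<in> A" "t \<in> N #> g"
    by (metis disjoint_iff measure_empty not_le)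
  then have "N #> g = N #> t"
    using repr_independence[OF _ g normal_imp_subgroup[OF N(1)]] by blast
  then show thesis
    using that N t(1) dense by simp
qed

lemma measure_eq_card_FactGroup:
  assumes N: "N \<lhd> G" and M: "M \<lhd> G" "openin T M" "M \<subseteq> N"
  shows "measure \<mu> N = card (carrier (G\<lparr>carrier := N\<rparr> Mod M)) * measure \<mu> M"
proof -
  interpret K: normal M "G\<lparr>carrier := N\<rparr>"
    using normal_restrict_supergroup[OF normal_imp_subgroup[OF N] M(1,3)] .
  have N_carrier: "N \<subseteq> carrier G"
    using N normal_imp_subgroup subgroup.subset by blast
  have "\<Union>(carrier (G\<lparr>carrier := N\<rparr> Mod M)) = N"
    using K.rcosets_part_G[OF K.subgroup_axioms] by (simp add: FactGroup_def)
  moreover have "carrier (G\<lparr>carrier := N\<rparr> Mod M) \<subseteq> rcosets M"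
    using N_carrier by (auto simp: carrier_FactGroup RCOSETS_def)
  ultimately show ?thesis
    using measure_Union_rcosets[OF M(1,2)] by metis
qed

lemma measure_pow_eq_one_r_coset_le:
  assumes t: "t \<in> carrier G" "t [^] n = \<one>" and N: "N \<lhd> G" and M: "M \<lhd> G" "openin T M" "M \<subseteq> N"
  shows "measure \<mu> ({x \<in> carrier G. x [^] n = \<one>} \<inter> (N #> t))
    \<le> card (X_twisted (G\<lparr>carrier := N\<rparr> Mod M) (\<lambda>C. (\<lambda>x. t \<otimes> x \<otimes> inv t) ` C) n) * measure \<mu> M"
proof -
  let ?X = "X_twisted (G\<lparr>carrier := N\<rparr> Mod M) (\<lambda>C. (\<lambda>x. t \<otimes> x \<otimes> inv t) ` C) n"
  define \<D> where "\<D> = (\<lambda>C. C #> t) ` ?X"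
  have fin: "finite ?X"
    using finite_carrier_FactGroup[OF M(1,2)] N normal_imp_subgroup subgroup.subset
    by (metis (no_types, lifting) X_twisted_def finite_subset mem_Collect_eq subsetI)
  have \<D>: "\<D> \<subseteq> rcosets M"
    using r_coset_FactGroup_in_rcosets[OF N M(1,3) t(1)] by (auto simp: \<D>_def X_twisted_def)
  then have "\<Union>\<D> \<in> sets \<mu>"
    using fin measure_rcosets_normal(1)[OF M(1,2)] by (auto simp: \<D>_def)
  then have "measure \<mu> ({x \<in> carrier G. x [^] n = \<one>} \<inter> (N #> t)) \<le> measure \<mu> (\<Union>\<D>)"
    using pow_eq_one_r_coset_subset_Union[OF N M(1,3) t]
    by (intro finite_measure.finite_measure_mono[OF finite_measure]) (auto simp: \<D>_def)
  also have "\<dots> = card \<D> * measure \<mu> M"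
    using measure_Union_rcosets[OF M(1,2) \<D>] .
  also have "\<dots> \<le> card ?X * measure \<mu> M"
    unfolding \<D>_def by (intro mult_right_mono) (simp_all add: card_image_le[OF fin])
  finally show ?thesis .
qed

text \<open>The relative measure of \<open>X\<close> in \<open>N t\<close> is at most the twisted density of \<open>N/M\<close>, which is
  either \<open>1\<close> or at most \<open>c_const n\<close>.\<close>

lemma X_twisted_FactGroup_conj_eq_carrier:
  assumes c: "c_const n \<le> c" and t: "t \<in> carrier G" "t [^] n = \<one>"
    and N: "N \<lhd> G"
    and dense: "c * measure \<mu> N < measure \<mu> ({x \<in> carrier G. x [^] n = \<one>} \<inter> (N #> t))"
    and M: "M \<lhd> G" "openin T M" "M \<subseteq> N"
  shows "X_twisted (G\<lparr>carrier := N\<rparr> Mod M) (\<lambda>C. (\<lambda>x. t \<otimes> x \<otimes> inv t) ` C) n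
    = carrier (G\<lparr>carrier := N\<rparr> Mod M)"
proof -
  let ?Q = "G\<lparr>carrier := N\<rparr> Mod M" and ?\<phi> = "\<lambda>C. (\<lambda>x. t \<otimes> x \<otimes> inv t) ` C"
  interpret K: normal M "G\<lparr>carrier := N\<rparr>"
    using normal_restrict_supergroup[OF normal_imp_subgroup[OF N] M(1,3)] .
  have fin: "finite (carrier ?Q)"
    using finite_carrier_FactGroup[OF M(1,2)] N normal_imp_subgroup subgroup.subset by blast
  have "c * card (carrier ?Q) * measure \<mu> M < card (X_twisted ?Q ?\<phi> n) * measure \<mu> M"
    using dense measure_eq_card_FactGroup[OF N M] measure_pow_eq_one_r_coset_le[OF t N M]
    by (simp add: mult.assoc)
  moreover have "measure \<mu> M \<noteq> 0"
    using calculation by auto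
  then have "0 < measure \<mu> M"
    by (simp add: less_le)
  ultimately have less: "c * card (carrier ?Q) < card (X_twisted ?Q ?\<phi> n)"
    by (simp add: mult_less_cancel_right_pos)
  have "card (X_twisted ?Q ?\<phi> n) = card (carrier ?Q)"
  proof (rule ccontr)
    assume "card (X_twisted ?Q ?\<phi> n) \<noteq> card (carrier ?Q)"
    then have "card (X_twisted ?Q ?\<phi> n) / card (carrier ?Q) \<le> c"
      using twisted_density_le_c_const[OF K.factorgroup_is_group fin
          conj_FactGroup_automorphism(1)[OF N M(1,3) t(1)] conj_FactGroup_funpow[OF N M(1,3) t]] c
      by linarith
    moreover have "0 < card (carrier ?Q)"
      using fin K.factorgroup_is_group group.is_monoid monoid.one_closed card_gt_0_iff by blast
    ultimately show False
      using less by (simp add: divide_le_eq)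
  qed
  then show ?thesis
    using card_subset_eq[OF fin] by (auto simp: X_twisted_def)
qed

lemma exists_r_coset_pow_eq_one:
  assumes c: "c_const n < 1" and pos: "0 < measure \<mu> {x \<in> carrier G. x [^] n = \<one>}"
  obtains N t where "N \<lhd> G" "openin T N" "t \<in> carrier G" "\<And>z. z \<in> N #> t \<Longrightarrow> z [^] n = \<one>"
proof -
  let ?X = "{x \<in> carrier G. x [^] n = \<one>}"
  \<comment> \<open>\<open>c_const n\<close> is a supremum that is never shown to be nonnegative.\<close>
  define c where "c = max (c_const n) 0"
  have "0 \<le> c" "c < 1"
    using c by (auto simp: c_def)
  then obtain N t where N: "N \<lhd> G" "openin T N" and t: "t \<in> ?X"
    and dense_t: "c * measure \<mu> N < measure \<mu> (?X \<inter> (N #> t))"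
    using exists_dense_r_coset[OF _ _ closedin_pow_eq_one pos] by blast
  have subgroup: "subgroup N G"
    using N(1) normal_imp_subgroup by blast
  have t_carrier: "t \<in> carrier G" and t_pow: "t [^] n = \<one>"
    using t by simp_all
  have "z [^] n = \<one>" if z: "z \<in> N #> t" for z
  proof -
    obtain y where y: "y \<in> N" "z = y \<otimes> t"
      using z by (auto simp: r_coset_def)
    have "(y \<otimes> t) [^] n \<in> M" if M: "M \<lhd> G" "openin T M" "M \<subseteq> N" for M
    proof -
      have "M #> y \<in> carrier (G\<lparr>carrier := N\<rparr> Mod M)"
        using y(1) by (auto simp: carrier_FactGroup)
      moreover have "c_const n \<le> c"
        by (simp add: c_def)
      ultimately show ?thesis
        using pow_mult_mem_iff_X_twisted[OF N(1) M(1,3) t_carrier t_pow y(1)]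
          X_twisted_FactGroup_conj_eq_carrier[OF _ t_carrier t_pow N(1) dense_t M] by simp
    qed
    then show ?thesis
      using eq_one_if_mem_open_normal_subgroups[OF _ N] t_carrier y subgroup.subset[OF subgroup] by auto
  qed
  then show thesis
    using that N t_carrier by blast
qed

end

theorem proposition2p6:
  fixes n :: nat and G :: "('a, 'b) monoid_scheme" and T :: "'a topology" and \<mu> :: "'a measure"
  assumes "n > 0"
    and "c_const n < 1"
    and "profinite_group G T"
    and "haar_measure G T \<mu>"
    and "measure \<mu> {x \<in> carrier G. x [^]\<^bsub>G\<^esub> n = \<one>\<^bsub>G\<^esub>} > 0"
  shows "\<exists>H t. subgroup H G \<and> openin T H \<and> t \<in> carrier G \<and>
           (\<forall>y \<in> t <#\<^bsub>G\<^esub> H. group.ord G y dvd n)"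
proof -
  have "group G"
    using assms(3) by (simp add: profinite_group_def topological_group_def)
  then interpret haar G T \<mu>
    using assms(3,4) by (simp add: haar_def haar_axioms_def profinite_def profinite_axioms_def)
  obtain N t where N: "N \<lhd> G" "openin T N" and t: "t \<in> carrier G"
    and pow: "\<And>z. z \<in> N #>\<^bsub>G\<^esub> t \<Longrightarrow> z [^]\<^bsub>G\<^esub> n = \<one>\<^bsub>G\<^esub>"
    using exists_r_coset_pow_eq_one[OF assms(2,5)] by blast
  have "group.ord G z dvd n" if "z \<in> t <#\<^bsub>G\<^esub> N" for z
  proof -
    have "z \<in> N #>\<^bsub>G\<^esub> t"
      using that normal.coset_eq[OF N(1)] t by simp
    moreover have "N #>\<^bsub>G\<^esub> t \<subseteq> carrier G"
      using r_coset_subset_G[OF subgroup.subset[OF normal_imp_subgroup[OF N(1)]] t] .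
    ultimately show ?thesis
      using pow pow_eq_id by auto
  qed
  then show ?thesis
    using normal_imp_subgroup[OF N(1)] N(2) t by blast
qed

end
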